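(* Let $\nu>0$, $\Delta t>0$, $\delta\in(0,1)$, and let $k$ be a time level at which the time step bound $$\Delta t\le\frac{\delta}{2\nu}\Big[\max_{i=1,\dots,N}\sum_{j\ne i}V_j\frac{|\dot w_h(|x^k_i-x^k_j|)|}{|x^k_i-x^k_j|}\Big]^{-1}$$ holds. Then for every $\Lambda\subset I_N$ and every $\phi\in V^k(\Lambda)^d$, $$\|\Delta_h\phi\|_{2,\Lambda}^2\le\frac{2\delta}{\Delta t\,\nu}\,|\phi|_{1,k,\Lambda}^2,$$ where $(\Delta_h\phi)_i=2\sum_{j\in\Lambda\setminus\{i\}}V_j\frac{\phi_i-\phi_j}{|x^k_i-x^k_j|}\frac{x^k_i-x^k_j}{|x^k_i-x^k_j|}\cdot\nabla w_h(|x^k_i-x^k_j|)$ for $i\in\Lambda$.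
   Context: Let $d\in\{2,3\}$. Reference weight function $w\in C^2([0,\infty))$ with some $r_0>0$: $w>0$ on $(0,r_0)$, $w=0$ on $[r_0,\infty)$, $\dot w<0$ on $(0,r_0)$, $\dot w(0)=0$, $\dot w=0$ on $[r_0,\infty)$, $\int_{\mathbb{R}^d}w(|x|)dx=1$. For $h>0$, $w_h(r)=h^{-d}w(r/h)$ with derivative $\dot w_h$; for $x\ne y$, $\nabla w_h(|x-y|)=\dot w_h(|x-y|)\frac{x-y}{|x-y|}$. $N\in\mathbb{N}$, $I_N=\{1,\dots,N\}$, particle volumes $V_1,\dots,V_N>0$, pairwise distinct particle positions $x^k_1,\dots,x^k_N\in\mathbb{R}^d$. $V^k(\Lambda)^m$ is the space of $\mathbb{R}^m$-valued functions on $\{x^k_i\}_{i\in\Lambda}$ (values $\phi_i$). Discrete $L^2$ norm $\|\phi\|_{2,\Lambda}=(\sum_{i\in\Lambda}V_i|\phi_i|^2)^{1/2}$; discrete semi-norm $|\phi|_{1,k,\Lambda}=\big(\sum_{i\in\Lambda}V_i\sum_{j\in\Lambda\setminus\{i\}}V_j\frac{|\phi_i-\phi_j|^2}{|x^k_i-x^k_j|}|\dot w_h(|x^k_i-x^k_j|)|\big)^{1/2}$. *)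

theory Defs
  imports "HOL-Analysis.Analysis"
begin

text \<open>Scaled kernel derivative: w_h(r) = h^(-d) w(r/h), hence
  dw_h(r) = h^(-d-1) dw(r/h), where dw is the derivative of w.\<close>
definition wh_deriv :: "nat \<Rightarrow> (real \<Rightarrow> real) \<Rightarrow> real \<Rightarrow> real \<Rightarrow> real" where
  "wh_deriv d dw h r = dw (r / h) / h ^ (d + 1)"

definition grad_wh :: "nat \<Rightarrow> (real \<Rightarrow> real) \<Rightarrow> real \<Rightarrow> real^'n \<Rightarrow> real^'n \<Rightarrow> real^'n" where
  "grad_wh d dw h x y = (wh_deriv d dw h (norm (x - y)) / norm (x - y)) *\<^sub>R (x - y)"

definition disc_L2_sq :: "(nat \<Rightarrow> real) \<Rightarrow> nat set \<Rightarrow> (nat \<Rightarrow> real^'n) \<Rightarrow> real" where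
  "disc_L2_sq V \<Lambda> \<phi> = (\<Sum>i\<in>\<Lambda>. V i * (norm (\<phi> i))\<^sup>2)"

definition disc_H1_sq :: "nat \<Rightarrow> (real \<Rightarrow> real) \<Rightarrow> real \<Rightarrow> (nat \<Rightarrow> real) \<Rightarrow> (nat \<Rightarrow> real^'n)
    \<Rightarrow> nat set \<Rightarrow> (nat \<Rightarrow> real^'n) \<Rightarrow> real" where
  "disc_H1_sq d dw h V x \<Lambda> \<phi> =
     (\<Sum>i\<in>\<Lambda>. V i * (\<Sum>j\<in>\<Lambda> - {i}. V j * (norm (\<phi> i - \<phi> j))\<^sup>2 / norm (x i - x j)
        * \<bar>wh_deriv d dw h (norm (x i - x j))\<bar>))"

definition disc_lap :: "nat \<Rightarrow> (real \<Rightarrow> real) \<Rightarrow> real \<Rightarrow> (nat \<Rightarrow> real) \<Rightarrow> (nat \<Rightarrow> real^'n)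
    \<Rightarrow> nat set \<Rightarrow> (nat \<Rightarrow> real^'n) \<Rightarrow> nat \<Rightarrow> real^'n" where
  "disc_lap d dw h V x \<Lambda> \<phi> i =
     2 *\<^sub>R (\<Sum>j\<in>\<Lambda> - {i}. (V j / norm (x i - x j)
        * (((x i - x j) /\<^sub>R norm (x i - x j)) \<bullet> grad_wh d dw h (x i) (x j))) *\<^sub>R (\<phi> i - \<phi> j))"

end

theory Submission
  imports Defs
begin

text \<open>Writing \<open>a\<^sub>i\<^sub>j = V\<^sub>j |w'\<^sub>h(r\<^sub>i\<^sub>j)| / r\<^sub>i\<^sub>j\<close>, the coefficient of \<open>\<phi>\<^sub>i - \<phi>\<^sub>j\<close> in
  \<open>(\<Delta>\<^sub>h\<phi>)\<^sub>i\<close> has modulus \<open>2 a\<^sub>i\<^sub>j\<close>. The triangle inequality and the weighted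
  Cauchy-Schwarz inequality give
  \<open>|(\<Delta>\<^sub>h\<phi>)\<^sub>i|\<^sup>2 \<le> 4 (\<Sum>\<^sub>j a\<^sub>i\<^sub>j) (\<Sum>\<^sub>j a\<^sub>i\<^sub>j |\<phi>\<^sub>i - \<phi>\<^sub>j|\<^sup>2)\<close>, and the time step bound says
  exactly that \<open>\<Sum>\<^sub>j a\<^sub>i\<^sub>j \<le> \<delta> / (2 \<nu> \<Delta>t)\<close>; multiplying by \<open>V\<^sub>i\<close> and summing over
  \<open>\<Lambda>\<close> yields the claim.\<close>

definition pair_weight :: "nat \<Rightarrow> (real \<Rightarrow> real) \<Rightarrow> real \<Rightarrow> (nat \<Rightarrow> real) \<Rightarrow> (nat \<Rightarrow> real^'n)
    \<Rightarrow> nat \<Rightarrow> nat \<Rightarrow> real" where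
  "pair_weight d dw h V x i j =
     V j * \<bar>wh_deriv d dw h (norm (x i - x j))\<bar> / norm (x i - x j)"

lemma pair_weight_nonneg: "V j \<ge> 0 \<Longrightarrow> pair_weight d dw h V x i j \<ge> 0"
  unfolding pair_weight_def by simp

lemma disc_H1_sq_eq_pair_weight:
  "disc_H1_sq d dw h V x \<Lambda> \<phi> =
     (\<Sum>i\<in>\<Lambda>. V i * (\<Sum>j\<in>\<Lambda> - {i}. pair_weight d dw h V x i j * (norm (\<phi> i - \<phi> j))\<^sup>2))"
  unfolding disc_H1_sq_def pair_weight_def by (simp add: field_simps)

lemma inner_unit_grad_wh:
  assumes "x \<noteq> y"
  shows "((x - y) /\<^sub>R norm (x - y)) \<bullet> grad_wh d dw h x y = wh_deriv d dw h (norm (x - y))"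
proof -
  have "norm (x - y) \<noteq> 0" using assms by simp
  then show ?thesis
    unfolding grad_wh_def by (simp add: inner_commute dot_square_norm power2_eq_square)
qed

lemma abs_disc_lap_coeff:
  assumes "V j \<ge> 0"
  shows "\<bar>V j / norm (x i - x j) * (((x i - x j) /\<^sub>R norm (x i - x j)) \<bullet> grad_wh d dw h (x i) (x j))\<bar>
    = pair_weight d dw h V x i j"
proof (cases "x i = x j")
  case False
  then show ?thesis
    unfolding inner_unit_grad_wh[OF False] using assms by (simp add: pair_weight_def abs_mult)
qed (simp add: pair_weight_def) \<comment> \<open>for \<open>x i = x j\<close> both sides are \<open>0\<close>, because \<open>t / 0 = 0\<close>\<close>

lemma weighted_Cauchy_Schwarz_sum:
  fixes a c :: "'a \<Rightarrow> real"
  assumes "\<And>j. j \<in> I \<Longrightarrow> a j \<ge> 0"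
  shows "(\<Sum>j\<in>I. a j * c j)\<^sup>2 \<le> (\<Sum>j\<in>I. a j) * (\<Sum>j\<in>I. a j * (c j)\<^sup>2)"
proof -
  have "(\<Sum>j\<in>I. a j * c j) = (\<Sum>j\<in>I. sqrt (a j) * (sqrt (a j) * c j))"
    by (rule sum.cong) (use assms in \<open>auto simp: mult.assoc[symmetric]\<close>)
  moreover have "(\<Sum>j\<in>I. a j) = (\<Sum>j\<in>I. (sqrt (a j))\<^sup>2)"
    by (rule sum.cong) (use assms in auto)
  moreover have "(\<Sum>j\<in>I. a j * (c j)\<^sup>2) = (\<Sum>j\<in>I. (sqrt (a j) * c j)\<^sup>2)"
    by (rule sum.cong) (use assms in \<open>auto simp: power_mult_distrib\<close>)
  ultimately show ?thesis
    using Cauchy_Schwarz_ineq_sum[of "\<lambda>j. sqrt (a j)" "\<lambda>j. sqrt (a j) * c j" I] by simp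
qed

lemma norm_sum_scaleR_squared_le:
  fixes c :: "'a \<Rightarrow> real" and v :: "'a \<Rightarrow> 'b::real_normed_vector"
  shows "(norm (\<Sum>j\<in>I. c j *\<^sub>R v j))\<^sup>2 \<le> (\<Sum>j\<in>I. \<bar>c j\<bar>) * (\<Sum>j\<in>I. \<bar>c j\<bar> * (norm (v j))\<^sup>2)"
proof -
  have "norm (\<Sum>j\<in>I. c j *\<^sub>R v j) \<le> (\<Sum>j\<in>I. \<bar>c j\<bar> * norm (v j))"
    using norm_sum[of "\<lambda>j. c j *\<^sub>R v j" I] by simp
  then have "(norm (\<Sum>j\<in>I. c j *\<^sub>R v j))\<^sup>2 \<le> (\<Sum>j\<in>I. \<bar>c j\<bar> * norm (v j))\<^sup>2"
    by (rule power_mono) simp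
  also have "\<dots> \<le> (\<Sum>j\<in>I. \<bar>c j\<bar>) * (\<Sum>j\<in>I. \<bar>c j\<bar> * (norm (v j))\<^sup>2)"
    by (rule weighted_Cauchy_Schwarz_sum) simp
  finally show ?thesis .
qed

lemma norm_disc_lap_squared_le:
  assumes "\<And>j. j \<in> \<Lambda> \<Longrightarrow> V j \<ge> 0"
  shows "(norm (disc_lap d dw h V x \<Lambda> \<phi> i))\<^sup>2 \<le>
    4 * (\<Sum>j\<in>\<Lambda> - {i}. pair_weight d dw h V x i j)
      * (\<Sum>j\<in>\<Lambda> - {i}. pair_weight d dw h V x i j * (norm (\<phi> i - \<phi> j))\<^sup>2)"
proof -
  define c where "c j = V j / norm (x i - x j)
    * (((x i - x j) /\<^sub>R norm (x i - x j)) \<bullet> grad_wh d dw h (x i) (x j))" for j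
  have abs_c: "\<bar>c j\<bar> = pair_weight d dw h V x i j" if "j \<in> \<Lambda> - {i}" for j
    unfolding c_def using assms that by (intro abs_disc_lap_coeff) auto
  have "(norm (disc_lap d dw h V x \<Lambda> \<phi> i))\<^sup>2 = 4 * (norm (\<Sum>j\<in>\<Lambda> - {i}. c j *\<^sub>R (\<phi> i - \<phi> j)))\<^sup>2"
    unfolding disc_lap_def c_def by (simp add: power_mult_distrib)
  also have "\<dots> \<le> 4 * ((\<Sum>j\<in>\<Lambda> - {i}. \<bar>c j\<bar>) * (\<Sum>j\<in>\<Lambda> - {i}. \<bar>c j\<bar> * (norm (\<phi> i - \<phi> j))\<^sup>2))"
    using norm_sum_scaleR_squared_le by simp
  also have "\<dots> = 4 * (\<Sum>j\<in>\<Lambda> - {i}. pair_weight d dw h V x i j)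
      * (\<Sum>j\<in>\<Lambda> - {i}. pair_weight d dw h V x i j * (norm (\<phi> i - \<phi> j))\<^sup>2)"
    using abs_c by (simp cong: sum.cong del: Diff_iff)
  finally show ?thesis .
qed

lemma disc_L2_sq_disc_lap_le:
  assumes V_nonneg: "\<And>j. j \<in> \<Lambda> \<Longrightarrow> V j \<ge> 0"
    and weight_bound: "\<And>i. i \<in> \<Lambda> \<Longrightarrow> (\<Sum>j\<in>\<Lambda> - {i}. pair_weight d dw h V x i j) \<le> K"
  shows "disc_L2_sq V \<Lambda> (disc_lap d dw h V x \<Lambda> \<phi>) \<le> 4 * K * disc_H1_sq d dw h V x \<Lambda> \<phi>"
proof -
  have "V i * (norm (disc_lap d dw h V x \<Lambda> \<phi> i))\<^sup>2
      \<le> 4 * K * (V i * (\<Sum>j\<in>\<Lambda> - {i}. pair_weight d dw h V x i j * (norm (\<phi> i - \<phi> j))\<^sup>2))"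
    if i: "i \<in> \<Lambda>" for i
  proof -
    let ?S = "\<Sum>j\<in>\<Lambda> - {i}. pair_weight d dw h V x i j * (norm (\<phi> i - \<phi> j))\<^sup>2"
    have "?S \<ge> 0"
      by (intro sum_nonneg mult_nonneg_nonneg pair_weight_nonneg V_nonneg) auto
    have "(norm (disc_lap d dw h V x \<Lambda> \<phi> i))\<^sup>2
        \<le> 4 * (\<Sum>j\<in>\<Lambda> - {i}. pair_weight d dw h V x i j) * ?S"
      using V_nonneg by (rule norm_disc_lap_squared_le)
    also have "\<dots> \<le> 4 * K * ?S"
      using weight_bound[OF i] \<open>?S \<ge> 0\<close> by (intro mult_right_mono) auto
    finally have "(norm (disc_lap d dw h V x \<Lambda> \<phi> i))\<^sup>2 \<le> 4 * K * ?S" .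
    then show ?thesis
      using mult_left_mono[OF _ V_nonneg[OF i]] by (simp add: mult.left_commute)
  qed
  then show ?thesis
    unfolding disc_L2_sq_def disc_H1_sq_eq_pair_weight sum_distrib_left by (rule sum_mono)
qed

theorem lemma5:
  fixes w dw ddw :: "real \<Rightarrow> real" and r0 h \<nu> \<Delta>t \<delta> :: real
    and N :: nat and V :: "nat \<Rightarrow> real" and x :: "nat \<Rightarrow> real^'n"
    and \<Lambda> :: "nat set" and \<phi> :: "nat \<Rightarrow> real^'n"
  assumes dim: "CARD('n) = 2 \<or> CARD('n) = 3"
    and w_d1: "\<And>r. r \<ge> 0 \<Longrightarrow> (w has_real_derivative dw r) (at r within {0..})"
    and w_d2: "\<And>r. r \<ge> 0 \<Longrightarrow> (dw has_real_derivative ddw r) (at r within {0..})"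
    and w_C2: "continuous_on {0..} ddw"
    and r0: "r0 > 0"
    and w_pos: "\<And>r. 0 < r \<Longrightarrow> r < r0 \<Longrightarrow> w r > 0"
    and w_zero: "\<And>r. r \<ge> r0 \<Longrightarrow> w r = 0"
    and dw_neg: "\<And>r. 0 < r \<Longrightarrow> r < r0 \<Longrightarrow> dw r < 0"
    and dw_0: "dw 0 = 0"
    and dw_zero: "\<And>r. r \<ge> r0 \<Longrightarrow> dw r = 0"
    and w_int: "((\<lambda>y::real^'n. w (norm y)) has_integral 1) UNIV"
    and h: "h > 0"
    and V: "\<And>i. i \<in> {1..N} \<Longrightarrow> V i > 0"
    and x_inj: "inj_on x {1..N}"
    and \<nu>: "\<nu> > 0" and \<Delta>t: "\<Delta>t > 0" and \<delta>: "0 < \<delta>" "\<delta> < 1"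
    and step: "\<forall>i\<in>{1..N}. 2 * \<nu> * \<Delta>t *
       (\<Sum>j\<in>{1..N} - {i}. V j * \<bar>wh_deriv CARD('n) dw h (norm (x i - x j))\<bar> / norm (x i - x j))
       \<le> \<delta>"
    and \<Lambda>: "\<Lambda> \<subseteq> {1..N}"
  shows "disc_L2_sq V \<Lambda> (disc_lap CARD('n) dw h V x \<Lambda> \<phi>)
    \<le> 2 * \<delta> / (\<Delta>t * \<nu>) * disc_H1_sq CARD('n) dw h V x \<Lambda> \<phi>"
proof -
  have V_nonneg: "V j \<ge> 0" if "j \<in> {1..N}" for j
    using V[OF that] by simp
  have "(\<Sum>j\<in>\<Lambda> - {i}. pair_weight CARD('n) dw h V x i j) \<le> \<delta> / (2 * \<nu> * \<Delta>t)"
    if "i \<in> \<Lambda>" for i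
  proof -
    have "(\<Sum>j\<in>\<Lambda> - {i}. pair_weight CARD('n) dw h V x i j)
        \<le> (\<Sum>j\<in>{1..N} - {i}. pair_weight CARD('n) dw h V x i j)"
      using \<Lambda> by (intro sum_mono2 pair_weight_nonneg V_nonneg) auto
    also have "2 * \<nu> * \<Delta>t * \<dots> \<le> \<delta>"
      using step \<Lambda> that by (auto simp: pair_weight_def)
    finally show ?thesis
      using \<nu> \<Delta>t by (simp add: pos_le_divide_eq mult.commute)
  qed
  then have "disc_L2_sq V \<Lambda> (disc_lap CARD('n) dw h V x \<Lambda> \<phi>)
      \<le> 4 * (\<delta> / (2 * \<nu> * \<Delta>t)) * disc_H1_sq CARD('n) dw h V x \<Lambda> \<phi>"
    using \<Lambda> V_nonneg by (intro disc_L2_sq_disc_lap_le) auto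
  also have "4 * (\<delta> / (2 * \<nu> * \<Delta>t)) = 2 * \<delta> / (\<Delta>t * \<nu>)"
    using \<nu> \<Delta>t by (simp add: field_simps)
  finally show ?thesis .
qed

end
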